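(* Let $G$ be a finite abelian group of even order $n$, let $S\subseteq G$ with $S=-S$ and $0\notin S$, and let $\Gamma=\mathrm{Cay}(G,S)$. Let $\alpha,\beta$ be nonzero complex numbers, let $x\neq y$ be vertices and $t\in\mathbb{R}$. Then $\Gamma$ has $(\alpha,\beta)$-fractional revival from $x$ to $y$ at time $t$ if and only if all of the following hold: (1) $a=x-y$ has order two in $G$; (2) $\Gamma$ is an integral graph; (3) $e^{\imath t\lambda_g}=\alpha+\beta$ for every $g\in G_0$ and $e^{\imath t\lambda_g}=\alpha-\beta$ for every $g\in G_1$, where $G_0=\{g\in G:\chi_a(g)=1\}$ and $G_1=\{g\in G:\chi_a(g)=-1\}$.
   Context: $\mathrm{Cay}(G,S)$ has vertex set $G$, with $u,v$ adjacent iff $u-v\in S$; $A$ is its adjacency matrix and $H(t)=\exp(\imath tA)$. For distinct vertices $x,y$, the graph has $(\alpha,\beta)$-fractional revival from $x$ to $y$ at time $t$ if $H(t)\mathbf{e}_x=\alpha\mathbf{e}_x+\beta\mathbf{e}_y$ with $\beta\neq0$ and $|\alpha|^2+|\beta|^2=1$. Write $G=\mathbb{Z}_{n_1}\oplus\cdots\oplus\mathbb{Z}_{n_r}$; for $x=(x_1,\dots,x_r)\in G$ the character $\chi_x$ is $\chi_x(g)=\prod_{s=1}^r e^{2\pi\imath x_sg_s/n_s}$ (so $\chi_x(g)=\chi_g(x)$). The eigenvalues of $A$ are $\lambda_g=\sum_{s\in S}\chi_g(s)$, $g\in G$. The graph is integral if all $\lambda_g$ are integers. *)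

theory Defs
  imports "HOL-Analysis.Analysis"
begin

text \<open>The group G = Z_{n_1} + ... + Z_{n_r} is given by the list of moduli ns = [n_1,...,n_r];
  its elements are integer lists x of length r with 0 <= x_s < n_s.\<close>

definition grp :: "nat list \<Rightarrow> int list set" where
  "grp ns = {x. length x = length ns \<and> (\<forall>i<length ns. 0 \<le> x ! i \<and> x ! i < int (ns ! i))}"

definition gzero :: "nat list \<Rightarrow> int list" where
  "gzero ns = replicate (length ns) 0"

definition gadd :: "nat list \<Rightarrow> int list \<Rightarrow> int list \<Rightarrow> int list" where
  "gadd ns x y = map (\<lambda>i. (x ! i + y ! i) mod int (ns ! i)) [0..<length ns]"

definition gneg :: "nat list \<Rightarrow> int list \<Rightarrow> int list" where
  "gneg ns x = map (\<lambda>i. (- (x ! i)) mod int (ns ! i)) [0..<length ns]"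

definition gsub :: "nat list \<Rightarrow> int list \<Rightarrow> int list \<Rightarrow> int list" where
  "gsub ns x y = map (\<lambda>i. (x ! i - y ! i) mod int (ns ! i)) [0..<length ns]"

definition chi :: "nat list \<Rightarrow> int list \<Rightarrow> int list \<Rightarrow> complex" where
  "chi ns x g = (\<Prod>s<length ns. exp (2 * of_real pi * \<i> * of_int (x ! s) * of_int (g ! s) / of_nat (ns ! s)))"

definition eigval :: "nat list \<Rightarrow> int list set \<Rightarrow> int list \<Rightarrow> complex" where
  "eigval ns S g = (\<Sum>s\<in>S. chi ns g s)"

definition integral_cayley :: "nat list \<Rightarrow> int list set \<Rightarrow> bool" where
  "integral_cayley ns S \<longleftrightarrow> (\<forall>g\<in>grp ns. eigval ns S g \<in> \<int>)"

definition adj :: "nat list \<Rightarrow> int list set \<Rightarrow> int list \<Rightarrow> int list \<Rightarrow> complex" where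
  "adj ns S u v = (if gsub ns u v \<in> S then 1 else 0)"

fun adjpow :: "nat list \<Rightarrow> int list set \<Rightarrow> nat \<Rightarrow> int list \<Rightarrow> int list \<Rightarrow> complex" where
  "adjpow ns S 0 u v = (if u = v then 1 else 0)"
| "adjpow ns S (Suc k) u v = (\<Sum>w\<in>grp ns. adj ns S u w * adjpow ns S k w v)"

definition transH :: "nat list \<Rightarrow> int list set \<Rightarrow> real \<Rightarrow> int list \<Rightarrow> int list \<Rightarrow> complex" where
  "transH ns S t u v = (\<Sum>k. (\<i> * of_real t) ^ k / of_nat (fact k) * adjpow ns S k u v)"

definition frac_revival :: "nat list \<Rightarrow> int list set \<Rightarrow> complex \<Rightarrow> complex \<Rightarrow> int list \<Rightarrow> int list \<Rightarrow> real \<Rightarrow> bool" where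
  "frac_revival ns S \<alpha> \<beta> x y t \<longleftrightarrow>
     (\<forall>u\<in>grp ns. transH ns S t u x = (if u = x then \<alpha> else 0) + (if u = y then \<beta> else 0))
     \<and> \<beta> \<noteq> 0 \<and> (cmod \<alpha>)\<^sup>2 + (cmod \<beta>)\<^sup>2 = 1"

definition has_order_two :: "nat list \<Rightarrow> int list \<Rightarrow> bool" where
  "has_order_two ns a \<longleftrightarrow> a \<noteq> gzero ns \<and> gadd ns a a = gzero ns"

end

theory Submission
  imports Defs "Jordan_Normal_Form.Char_Poly"
begin

(* The characters \<chi>_g are eigenvectors of the adjacency matrix with eigenvalues \<lambda>_g, so
   H(t) = (1/n) \<Sum>_g e^(it\<lambda>_g) \<chi>_g \<chi>_g^*. Comparing Fourier coefficients, fractional revival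
   from x to y amounts to e^(it\<lambda>_g) = \<alpha> + \<beta> \<chi>_g(x - y) for all g, together with
   |\<alpha>|^2 + |\<beta>|^2 = 1, which follows from |\<alpha> \<pm> \<beta>| = 1 by the parallelogram law.
   As S = -S gives \<lambda>_(-g) = \<lambda>_g and \<beta> \<noteq> 0, every \<chi>_g(x - y) is real, i.e. x - y has order two,
   and the spectral condition splits into the two cosets of the kernel of \<chi>_(x-y).
   Integrality comes from a rationality argument: the eigenvalues are algebraic integers
   (roots of the characteristic polynomial of a 0/1 matrix), and the two-valuedness of
   e^(it\<lambda>_g) combined with the trace identities forces them to be rational. *)

lemma exp_sums_fact: "(\<lambda>k. z ^ k / of_nat (fact k)) sums exp (z :: complex)"
  using exp_converges[of z] by (simp add: scaleR_conv_of_real divide_inverse mult.commute)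

lemma exp_i_mult_eq_imp_Ints:
  fixes z w :: complex
  assumes "t \<noteq> 0" "exp (\<i> * of_real t * z) = exp (\<i> * of_real t * w)"
  shows "(z - w) / of_real (2 * pi / t) \<in> \<int>"
proof -
  obtain k :: int where "\<i> * of_real t * z = \<i> * of_real t * w + of_real (of_int (2 * k) * pi) * \<i>"
    using assms(2) unfolding exp_eq by blast
  hence "\<i> * (of_real t * (z - w)) = \<i> * (2 * of_real pi * of_int k)"
    by (simp add: algebra_simps)
  hence "of_real t * (z - w) = 2 * of_real pi * of_int k"
    by (rule mult_left_cancel[THEN iffD1, rotated]) simp
  moreover have "(z - w) / of_real (2 * pi / t) = of_real t * (z - w) / (2 * of_real pi)"
    using assms(1) by (simp add: field_simps)
  ultimately have "(z - w) / of_real (2 * pi / t) = of_int k"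
    by simp
  thus ?thesis by simp
qed

lemma Rats_if_Ints_quotient_dividend:
  fixes z c :: "'a :: field_char_0"
  assumes "z \<noteq> 0" "z \<in> \<rat>" "z / c \<in> \<int>"
  shows "c \<in> \<rat>"
proof (cases "c = 0")
  case False
  then have "c = z / (z / c)" using assms(1) by simp
  then show ?thesis using assms(2,3) Ints_subset_Rats by (metis Rats_divide subsetD)
qed simp

lemma Rats_if_Ints_quotient_divisor:
  fixes z c :: "'a :: field_char_0"
  assumes "c \<noteq> 0" "c \<in> \<rat>" "z / c \<in> \<int>"
  shows "z \<in> \<rat>"
proof -
  have "z = c * (z / c)" using assms(1) by simp
  then show ?thesis using assms(2,3) Ints_subset_Rats by (metis Rats_mult subsetD)
qed

lemma parallelogram_law_cmod:
  "(cmod (a + b))\<^sup>2 + (cmod (a - b))\<^sup>2 = 2 * ((cmod a)\<^sup>2 + (cmod b)\<^sup>2)"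
  by (simp add: cmod_power2 power2_sum power2_diff)

lemma algebraic_int_eigenvalue_of_int_mat:
  assumes "A \<in> carrier_mat n n" "eigenvalue (map_mat of_int A) (z :: complex)"
  shows "algebraic_int z"
proof -
  have "map_mat of_int A \<in> carrier_mat n n"
    using assms(1) by simp
  then have "poly (char_poly (map_mat of_int A)) z = 0"
    using assms(2) eigenvalue_root_char_poly by blast
  then have "poly (map_poly of_int (char_poly A)) z = 0"
    unfolding of_int_hom.char_poly_hom[OF assms(1)] .
  moreover have "lead_coeff (char_poly A) = 1"
    using degree_monic_char_poly[OF assms(1)] by simp
  ultimately show ?thesis
    unfolding algebraic_int_altdef_ipoly by blast
qed

section \<open>Characters of a direct sum of cyclic groups\<close>

definition unity_root :: "nat \<Rightarrow> int \<Rightarrow> complex" where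
  "unity_root m k = exp (2 * of_real pi * \<i> * of_int k / of_nat m)"

lemma unity_root_0 [simp]: "unity_root m 0 = 1"
  unfolding unity_root_def by simp

lemma unity_root_add: "unity_root m (a + b) = unity_root m a * unity_root m b"
  unfolding unity_root_def by (simp add: exp_add[symmetric] ring_distribs add_divide_distrib)

lemma unity_root_exp_i: "unity_root m k = exp (\<i> * complex_of_real (2 * pi * k / m))"
  unfolding unity_root_def by (simp add: mult_ac)

lemma unity_root_eq_1_iff:
  assumes "m \<ge> 1"
  shows "unity_root m k = 1 \<longleftrightarrow> int m dvd k"
proof -
  have "unity_root m k = 1 \<longleftrightarrow> (\<exists>j::int. 2 * pi * k / m = real_of_int (2 * j) * pi)"
    unfolding unity_root_exp_i exp_eq_1 by (simp add: mult.commute)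
  also have "\<dots> \<longleftrightarrow> (\<exists>j::int. real_of_int k = real m * real_of_int j)"
    using assms by (intro ex_cong1) (auto simp: field_simps)
  also have "\<dots> \<longleftrightarrow> int m dvd k"
    by (metis dvd_def of_int_eq_iff of_int_mult of_int_of_nat_eq)
  finally show ?thesis .
qed

lemma unity_root_mod:
  assumes "m \<ge> 1"
  shows "unity_root m (k mod int m) = unity_root m k"
proof -
  have "unity_root m k = unity_root m (k mod int m) * unity_root m (int m * (k div int m))"
    by (metis mult_div_mod_eq add.commute unity_root_add)
  thus ?thesis using unity_root_eq_1_iff[OF assms] by simp
qed

lemma cnj_unity_root: "cnj (unity_root m k) = unity_root m (- k)"
  unfolding unity_root_def by (simp add: exp_cnj)

lemma norm_unity_root [simp]: "cmod (unity_root m k) = 1"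
  unfolding unity_root_exp_i by (rule norm_exp_i_times)

lemma gadd_nth [simp]: "i < length ns \<Longrightarrow> gadd ns x y ! i = (x ! i + y ! i) mod int (ns ! i)"
  by (simp add: gadd_def)

lemma gsub_nth [simp]: "i < length ns \<Longrightarrow> gsub ns x y ! i = (x ! i - y ! i) mod int (ns ! i)"
  by (simp add: gsub_def)

lemma gneg_nth [simp]: "i < length ns \<Longrightarrow> gneg ns x ! i = (- (x ! i)) mod int (ns ! i)"
  by (simp add: gneg_def)

lemma gzero_nth [simp]: "i < length ns \<Longrightarrow> gzero ns ! i = 0"
  by (simp add: gzero_def)

lemma chi_unity_root: "chi ns x g = (\<Prod>s<length ns. unity_root (ns ! s) (x ! s * g ! s))"
  unfolding chi_def unity_root_def by (simp add: mult_ac)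

lemma chi_commute: "chi ns x g = chi ns g x"
  unfolding chi_def by (simp add: mult_ac)

lemma chi_gzero [simp]: "chi ns (gzero ns) g = 1" "chi ns g (gzero ns) = 1"
  unfolding chi_unity_root by simp_all

lemma norm_chi [simp]: "cmod (chi ns g x) = 1"
  unfolding chi_unity_root by (simp add: prod_norm[symmetric])

lemma chi_mult_cnj [simp]: "chi ns g x * cnj (chi ns g x) = 1"
  by (metis complex_norm_square norm_chi of_real_1 one_power2)

lemma chi_nonzero [simp]: "chi ns g x \<noteq> 0"
  by (metis norm_chi norm_zero zero_neq_one)

locale direct_sum_cyclic =
  fixes ns :: "nat list"
  assumes moduli_pos: "\<forall>i<length ns. ns ! i \<ge> 1"
begin

lemma grp_eqI:
  assumes "x \<in> grp ns" "y \<in> grp ns"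
    and "\<And>i. i < length ns \<Longrightarrow> x ! i mod int (ns ! i) = y ! i mod int (ns ! i)"
  shows "x = y"
  using assms by (intro nth_equalityI) (auto simp: grp_def)

lemma modulus_pos: "i < length ns \<Longrightarrow> int (ns ! i) > 0"
  using moduli_pos by fastforce

lemma gadd_grp [simp]: "gadd ns x y \<in> grp ns"
  using modulus_pos by (simp add: grp_def gadd_def)

lemma gsub_grp [simp]: "gsub ns x y \<in> grp ns"
  using modulus_pos by (simp add: grp_def gsub_def)

lemma gneg_grp [simp]: "gneg ns x \<in> grp ns"
  using modulus_pos by (simp add: grp_def gneg_def)

lemma gzero_grp [simp]: "gzero ns \<in> grp ns"
  using modulus_pos by (simp add: grp_def gzero_def)

lemma finite_grp [simp]: "finite (grp ns)"
proof (rule finite_subset)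
  show "grp ns \<subseteq> {xs. set xs \<subseteq> {0..int (sum_list ns)} \<and> length xs = length ns}"
    by (force simp: grp_def in_set_conv_nth intro: order.trans[OF _ of_nat_mono[OF elem_le_sum_list]])
qed (rule finite_lists_length_eq, simp)

lemma grp_nonempty [simp]: "grp ns \<noteq> {}"
  using gzero_grp by blast

lemma card_grp_pos: "card (grp ns) > 0"
  by (simp add: card_gt_0_iff)

lemma gsub_gsub: "w \<in> grp ns \<Longrightarrow> gsub ns u (gsub ns u w) = w"
  by (rule grp_eqI) (simp_all add: mod_diff_right_eq)

lemma gadd_gsub: "g \<in> grp ns \<Longrightarrow> gadd ns h (gsub ns g h) = g"
  by (rule grp_eqI) (simp_all add: mod_add_right_eq)

lemma gsub_gadd: "g \<in> grp ns \<Longrightarrow> gsub ns (gadd ns h g) h = g"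
  by (rule grp_eqI) (simp_all add: mod_diff_left_eq)

lemma gneg_gneg: "x \<in> grp ns \<Longrightarrow> gneg ns (gneg ns x) = x"
  by (rule grp_eqI) (simp_all add: mod_minus_eq)

lemma gsub_eq_gzero_iff:
  assumes "x \<in> grp ns" "y \<in> grp ns"
  shows "gsub ns x y = gzero ns \<longleftrightarrow> x = y"
proof
  assume "gsub ns x y = gzero ns"
  hence "i < length ns \<Longrightarrow> (x ! i - y ! i) mod int (ns ! i) = 0" for i
    by (metis gsub_nth gzero_nth)
  then show "x = y"
    using assms by (intro grp_eqI) (auto simp: mod_eq_dvd_iff)
qed (rule grp_eqI, simp_all)

lemma gadd_eq_gzero_imp_eq_gneg:
  assumes "y \<in> grp ns" "gadd ns x y = gzero ns"
  shows "y = gneg ns x"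
proof (rule grp_eqI)
  fix i assume i: "i < length ns"
  hence "(x ! i + y ! i) mod int (ns ! i) = 0"
    using assms(2) by (metis gadd_nth gzero_nth)
  hence "int (ns ! i) dvd y ! i - - (x ! i)"
    by (simp add: dvd_eq_mod_eq_0 add.commute)
  hence "y ! i mod int (ns ! i) = (- (x ! i)) mod int (ns ! i)"
    by (rule mod_eq_dvd_iff[THEN iffD2])
  then show "y ! i mod int (ns ! i) = gneg ns x ! i mod int (ns ! i)"
    using i by simp
qed (use assms in simp_all)

lemma gadd_gneg: "gadd ns x (gneg ns x) = gzero ns"
  by (rule grp_eqI) (simp_all add: mod_add_right_eq)

lemma unity_root_mult_mod:
  "s < length ns \<Longrightarrow> unity_root (ns ! s) (a * (b mod int (ns ! s))) = unity_root (ns ! s) (a * b)"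
  using moduli_pos by (metis mod_mult_right_eq unity_root_mod)

lemma chi_gadd: "chi ns g (gadd ns x y) = chi ns g x * chi ns g y"
  unfolding chi_unity_root prod.distrib[symmetric]
  by (rule prod.cong) (simp_all add: unity_root_mult_mod distrib_left unity_root_add)

lemma chi_gneg: "chi ns g (gneg ns x) = cnj (chi ns g x)"
  unfolding chi_unity_root cnj_prod cnj_unity_root
  by (rule prod.cong) (simp_all add: unity_root_mult_mod)

lemma gsub_eq_gadd_gneg: "gsub ns x y = gadd ns x (gneg ns y)"
  by (rule grp_eqI) (simp_all add: mod_add_right_eq)

lemma chi_gsub: "chi ns g (gsub ns x y) = chi ns g x * cnj (chi ns g y)"
  by (simp add: gsub_eq_gadd_gneg chi_gadd chi_gneg)

lemma chi_gsub_mult_cnj: "chi ns (gsub ns x y) g * cnj (chi ns g x) = cnj (chi ns g y)"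
proof -
  have "chi ns (gsub ns x y) g * cnj (chi ns g x) = chi ns g x * cnj (chi ns g x) * cnj (chi ns g y)"
    by (simp add: chi_commute[of _ "gsub ns x y"] chi_gsub mult_ac)
  then show ?thesis by simp
qed

lemma sum_chi:
  assumes a: "a \<in> grp ns"
  shows "(\<Sum>g\<in>grp ns. chi ns a g) = (if a = gzero ns then of_nat (card (grp ns)) else 0)"
proof (cases "a = gzero ns")
  case False
  obtain i where i: "i < length ns" "a ! i \<noteq> 0"
    using False a by (metis grp_eqI gzero_grp gzero_nth)
  have ai: "0 < a ! i" "a ! i < int (ns ! i)"
    using a i by (auto simp: grp_def)
  define h where "h = map (\<lambda>j. if j = i then 1 else 0 :: int) [0..<length ns]"
  have h: "h \<in> grp ns"
    using ai modulus_pos by (auto simp: grp_def h_def)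
  have "chi ns a h = (\<Prod>s<length ns. if s = i then unity_root (ns ! i) (a ! i) else 1)"
    unfolding chi_unity_root by (rule prod.cong) (auto simp: h_def)
  also have "\<dots> = unity_root (ns ! i) (a ! i)"
    using i by (simp add: prod.delta)
  finally have "chi ns a h \<noteq> 1"
    using ai moduli_pos i by (auto simp: unity_root_eq_1_iff zdvd_not_zless)
  have "(\<Sum>g\<in>grp ns. chi ns a g) = (\<Sum>g\<in>grp ns. chi ns a (gadd ns h g))"
    by (rule sum.reindex_bij_witness[where j = "\<lambda>b. gsub ns b h" and i = "gadd ns h"])
       (simp_all add: gsub_gadd gadd_gsub)
  also have "\<dots> = chi ns a h * (\<Sum>g\<in>grp ns. chi ns a g)"
    by (simp add: chi_gadd sum_distrib_left)
  finally have "(1 - chi ns a h) * (\<Sum>g\<in>grp ns. chi ns a g) = 0"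
    by (simp add: algebra_simps)
  with \<open>chi ns a h \<noteq> 1\<close> False show ?thesis by simp
qed simp

lemma sum_chi_mult_cnj_chi:
  assumes "u \<in> grp ns" "v \<in> grp ns"
  shows "(\<Sum>g\<in>grp ns. chi ns g u * cnj (chi ns g v)) = (if u = v then of_nat (card (grp ns)) else 0)"
proof -
  have "(\<Sum>g\<in>grp ns. chi ns g u * cnj (chi ns g v)) = (\<Sum>g\<in>grp ns. chi ns (gsub ns u v) g)"
    by (simp add: chi_gsub chi_commute[of _ "gsub ns u v"])
  thus ?thesis
    using sum_chi[of "gsub ns u v"] gsub_eq_gzero_iff[OF assms] by simp
qed

lemma sum_chi_mult_cnj_chi':
  assumes "h \<in> grp ns" "g \<in> grp ns"
  shows "(\<Sum>u\<in>grp ns. chi ns h u * cnj (chi ns g u)) = (if h = g then of_nat (card (grp ns)) else 0)"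
proof -
  have "(\<Sum>u\<in>grp ns. chi ns h u * cnj (chi ns g u)) = (\<Sum>u\<in>grp ns. chi ns u h * cnj (chi ns u g))"
    by (rule sum.cong[OF refl]) (metis chi_commute)
  thus ?thesis using sum_chi_mult_cnj_chi[OF assms] by simp
qed

lemma chi_pm_one:
  assumes "gadd ns a a = gzero ns"
  shows "chi ns a g = 1 \<or> chi ns a g = -1"
proof -
  have "chi ns a g ^ 2 = 1"
    using chi_gadd[of g a a] assms by (simp add: chi_commute[of _ a] power2_eq_square)
  thus ?thesis by (simp add: power2_eq_1_iff)
qed

lemma ex_chi_eq_neg_one:
  assumes "a \<in> grp ns" "a \<noteq> gzero ns" "gadd ns a a = gzero ns"
  shows "\<exists>g\<in>grp ns. chi ns a g = -1"
proof (rule ccontr)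
  assume "\<not> ?thesis"
  hence "\<forall>g\<in>grp ns. chi ns a g = 1"
    using chi_pm_one[OF assms(3)] by blast
  hence "(\<Sum>g\<in>grp ns. chi ns a g) = of_nat (card (grp ns))"
    by simp
  thus False using sum_chi assms(1,2) card_grp_pos by simp
qed

lemma gadd_self_eq_gzeroI:
  assumes "a \<in> grp ns" "\<And>g. g \<in> grp ns \<Longrightarrow> cnj (chi ns a g) = chi ns a g"
  shows "gadd ns a a = gzero ns"
proof -
  have "chi ns (gadd ns a a) g = 1" if "g \<in> grp ns" for g
  proof -
    have "chi ns a g * chi ns a g = 1"
      using assms(2)[OF that] chi_mult_cnj[of ns a g] by simp
    thus ?thesis by (simp add: chi_commute[of _ _ g] chi_gadd)
  qed
  hence "(\<Sum>g\<in>grp ns. chi ns (gadd ns a a) g) \<noteq> 0"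
    using card_grp_pos by simp
  thus ?thesis using sum_chi[of "gadd ns a a"] by (simp split: if_splits)
qed

end

section \<open>Spectral decomposition of the Cayley graph\<close>

locale cayley_graph = direct_sum_cyclic +
  fixes S :: "int list set"
  assumes connection_subset: "S \<subseteq> grp ns"
    and connection_symmetric: "gneg ns ` S = S"
begin

lemma finite_connection: "finite S"
  using connection_subset finite_grp finite_subset by blast

lemma sum_connection_gneg: "(\<Sum>s\<in>S. f (gneg ns s)) = (\<Sum>s\<in>S. f s)"
proof -
  have "inj_on (gneg ns) S"
    using connection_subset by (metis inj_on_inverseI gneg_gneg subsetD)
  then show ?thesis
    using sum.reindex[of "gneg ns" S f] connection_symmetric by simp
qed

lemma cnj_eigval: "cnj (eigval ns S g) = eigval ns S g"
  using sum_connection_gneg[of "chi ns g"] by (simp add: eigval_def chi_gneg)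

lemma eigval_gneg: "eigval ns S (gneg ns g) = eigval ns S g"
proof -
  have "chi ns (gneg ns g) s = chi ns g (gneg ns s)" for s
    by (simp add: chi_commute[of _ _ s] chi_gneg)
  then show ?thesis
    using sum_connection_gneg[of "chi ns g"] by (simp add: eigval_def)
qed

lemma sum_adj:
  assumes "u \<in> grp ns"
  shows "(\<Sum>w\<in>grp ns. adj ns S u w * f w) = (\<Sum>s\<in>S. f (gsub ns u s))"
proof -
  have "(\<Sum>w\<in>grp ns. adj ns S u w * f w) = (\<Sum>w\<in>grp ns. if gsub ns u w \<in> S then f w else 0)"
    by (rule sum.cong) (auto simp: adj_def)
  also have "\<dots> = (\<Sum>w\<in>{w\<in>grp ns. gsub ns u w \<in> S}. f w)"
    by (simp add: sum.inter_filter)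
  also have "\<dots> = (\<Sum>s\<in>S. f (gsub ns u s))"
    by (rule sum.reindex_bij_witness[where i = "gsub ns u" and j = "gsub ns u"])
       (use connection_subset in \<open>auto simp: gsub_gsub\<close>)
  finally show ?thesis .
qed

lemma adj_mult_chi:
  assumes "u \<in> grp ns"
  shows "(\<Sum>w\<in>grp ns. adj ns S u w * chi ns g w) = eigval ns S g * chi ns g u"
proof -
  have "(\<Sum>w\<in>grp ns. adj ns S u w * chi ns g w) = (\<Sum>s\<in>S. chi ns g (gsub ns u s))"
    by (rule sum_adj[OF assms])
  also have "\<dots> = chi ns g u * (\<Sum>s\<in>S. chi ns g (gneg ns s))"
    by (simp add: chi_gsub chi_gneg sum_distrib_left)
  finally show ?thesis
    by (simp add: sum_connection_gneg eigval_def mult.commute)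
qed

lemma adjpow_eq:
  assumes "u \<in> grp ns" "v \<in> grp ns"
  shows "adjpow ns S k u v
    = (\<Sum>g\<in>grp ns. eigval ns S g ^ k * chi ns g u * cnj (chi ns g v)) / of_nat (card (grp ns))"
  using assms(1)
proof (induction k arbitrary: u)
  case 0
  then show ?case
    using sum_chi_mult_cnj_chi[OF 0 assms(2)] card_grp_pos by simp
next
  case (Suc k)
  let ?c = "\<lambda>g. eigval ns S g ^ k * cnj (chi ns g v) / of_nat (card (grp ns))"
  have "adjpow ns S (Suc k) u v = (\<Sum>w\<in>grp ns. \<Sum>g\<in>grp ns. ?c g * (adj ns S u w * chi ns g w))"
    by (simp add: Suc.IH sum_divide_distrib sum_distrib_left mult_ac)
  also have "\<dots> = (\<Sum>g\<in>grp ns. ?c g * (\<Sum>w\<in>grp ns. adj ns S u w * chi ns g w))"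
    by (subst sum.swap) (simp add: sum_distrib_left)
  also have "\<dots> = (\<Sum>g\<in>grp ns. eigval ns S g ^ Suc k * chi ns g u * cnj (chi ns g v))
      / of_nat (card (grp ns))"
    by (simp only: adj_mult_chi[OF Suc.prems]) (simp add: sum_divide_distrib mult_ac)
  finally show ?case .
qed

lemma transH_eq:
  assumes "u \<in> grp ns" "v \<in> grp ns"
  shows "transH ns S t u v = (\<Sum>g\<in>grp ns. exp (\<i> * of_real t * eigval ns S g)
    * chi ns g u * cnj (chi ns g v)) / of_nat (card (grp ns))"
proof -
  define c where "c g = chi ns g u * cnj (chi ns g v) / of_nat (card (grp ns))" for g
  have "(\<lambda>k. (\<i> * of_real t) ^ k / of_nat (fact k) * adjpow ns S k u v)
      = (\<lambda>k. \<Sum>g\<in>grp ns. c g * ((\<i> * of_real t * eigval ns S g) ^ k / of_nat (fact k)))"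
    by (simp add: adjpow_eq[OF assms] c_def sum_distrib_left sum_divide_distrib
        power_mult_distrib mult_ac)
  moreover have "(\<lambda>k. \<Sum>g\<in>grp ns. c g * ((\<i> * of_real t * eigval ns S g) ^ k / of_nat (fact k)))
      sums (\<Sum>g\<in>grp ns. c g * exp (\<i> * of_real t * eigval ns S g))"
    by (intro sums_sum sums_mult exp_sums_fact)
  ultimately have "(\<lambda>k. (\<i> * of_real t) ^ k / of_nat (fact k) * adjpow ns S k u v)
      sums (\<Sum>g\<in>grp ns. c g * exp (\<i> * of_real t * eigval ns S g))"
    by simp
  hence "transH ns S t u v = (\<Sum>g\<in>grp ns. c g * exp (\<i> * of_real t * eigval ns S g))"
    unfolding transH_def by (rule sums_unique[symmetric])
  thus ?thesis by (simp add: c_def sum_divide_distrib mult_ac)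
qed

lemma sum_transH_mult_cnj_chi:
  assumes "v \<in> grp ns" "g \<in> grp ns"
  shows "(\<Sum>u\<in>grp ns. transH ns S t u v * cnj (chi ns g u))
    = exp (\<i> * of_real t * eigval ns S g) * cnj (chi ns g v)"
proof -
  let ?c = "\<lambda>h. exp (\<i> * of_real t * eigval ns S h) * cnj (chi ns h v) / of_nat (card (grp ns))"
  have "(\<Sum>u\<in>grp ns. transH ns S t u v * cnj (chi ns g u))
      = (\<Sum>u\<in>grp ns. \<Sum>h\<in>grp ns. ?c h * (chi ns h u * cnj (chi ns g u)))"
    by (rule sum.cong[OF refl])
       (simp add: transH_eq assms sum_divide_distrib sum_distrib_left sum_distrib_right mult_ac)
  also have "\<dots> = (\<Sum>h\<in>grp ns. ?c h * (\<Sum>u\<in>grp ns. chi ns h u * cnj (chi ns g u)))"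
    by (subst sum.swap) (simp add: sum_distrib_left)
  also have "\<dots> = exp (\<i> * of_real t * eigval ns S g) * cnj (chi ns g v)"
    using assms card_grp_pos by (simp add: sum_chi_mult_cnj_chi' if_distrib cong: if_cong)
  finally show ?thesis .
qed

lemma norm_exp_i_mult_eigval [simp]: "cmod (exp (\<i> * of_real t * eigval ns S g)) = 1"
proof -
  have "eigval ns S g = of_real (Re (eigval ns S g))"
    using cnj_eigval Reals_cnj_iff by (metis Re_complex_of_real Reals_cases)
  then have "exp (\<i> * of_real t * eigval ns S g) = exp (\<i> * of_real (t * Re (eigval ns S g)))"
    by (metis mult.assoc of_real_mult)
  then show ?thesis by (simp only: norm_exp_i_times)
qed

lemma spectrum_if_transH_column:
  assumes "x \<in> grp ns" "y \<in> grp ns" "g \<in> grp ns"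
    and column: "\<forall>u\<in>grp ns. transH ns S t u x = (if u = x then \<alpha> else 0) + (if u = y then \<beta> else 0)"
  shows "exp (\<i> * of_real t * eigval ns S g) = \<alpha> + \<beta> * chi ns (gsub ns x y) g"
proof -
  have "exp (\<i> * of_real t * eigval ns S g) * cnj (chi ns g x)
      = (\<Sum>u\<in>grp ns. transH ns S t u x * cnj (chi ns g u))"
    using sum_transH_mult_cnj_chi[OF assms(1,3)] by simp
  also have "\<dots> = (\<Sum>u\<in>grp ns. (if u = x then \<alpha> * cnj (chi ns g u) else 0)
      + (if u = y then \<beta> * cnj (chi ns g u) else 0))"
    using column by (intro sum.cong) (auto simp: distrib_right)
  also have "\<dots> = \<alpha> * cnj (chi ns g x) + \<beta> * cnj (chi ns g y)"
    using assms(1,2) by (simp only: sum.distrib) simp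
  also have "\<dots> = (\<alpha> + \<beta> * chi ns (gsub ns x y) g) * cnj (chi ns g x)"
    by (simp add: distrib_right chi_gsub_mult_cnj mult.assoc)
  finally show ?thesis by simp
qed

lemma transH_column_if_spectrum:
  assumes "x \<in> grp ns" "y \<in> grp ns" "u \<in> grp ns"
    and spec: "\<forall>g\<in>grp ns. exp (\<i> * of_real t * eigval ns S g) = \<alpha> + \<beta> * chi ns (gsub ns x y) g"
  shows "transH ns S t u x = (if u = x then \<alpha> else 0) + (if u = y then \<beta> else 0)"
proof -
  have "exp (\<i> * of_real t * eigval ns S g) * chi ns g u * cnj (chi ns g x)
      = \<alpha> * (chi ns g u * cnj (chi ns g x)) + \<beta> * (chi ns g u * cnj (chi ns g y))"
    if "g \<in> grp ns" for g
  proof -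
    have "exp (\<i> * of_real t * eigval ns S g) * chi ns g u * cnj (chi ns g x)
        = chi ns g u * (\<alpha> * cnj (chi ns g x) + \<beta> * (chi ns (gsub ns x y) g * cnj (chi ns g x)))"
      using spec that by (simp add: algebra_simps)
    also have "\<dots> = chi ns g u * (\<alpha> * cnj (chi ns g x) + \<beta> * cnj (chi ns g y))"
      by (simp only: chi_gsub_mult_cnj)
    finally show ?thesis by (simp add: algebra_simps)
  qed
  then have "transH ns S t u x = (\<Sum>g\<in>grp ns. \<alpha> * (chi ns g u * cnj (chi ns g x))
      + \<beta> * (chi ns g u * cnj (chi ns g y))) / of_nat (card (grp ns))"
    by (simp add: transH_eq[OF assms(3,1)])
  also have "\<dots> = (if u = x then \<alpha> else 0) + (if u = y then \<beta> else 0)"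
    using card_grp_pos
    by (simp add: sum.distrib sum_distrib_left[symmetric] add_divide_distrib
        sum_chi_mult_cnj_chi[OF assms(3,1)] sum_chi_mult_cnj_chi[OF assms(3,2)])
  finally show ?thesis .
qed

lemma transH_column_iff:
  assumes "x \<in> grp ns" "y \<in> grp ns"
  shows "(\<forall>u\<in>grp ns. transH ns S t u x = (if u = x then \<alpha> else 0) + (if u = y then \<beta> else 0))
    \<longleftrightarrow> (\<forall>g\<in>grp ns. exp (\<i> * of_real t * eigval ns S g) = \<alpha> + \<beta> * chi ns (gsub ns x y) g)"
  using spectrum_if_transH_column[OF assms] transH_column_if_spectrum[OF assms] by blast

section \<open>Consequences of the spectral condition\<close>

lemma gadd_self_eq_gzero_if_spectrum:
  assumes "a \<in> grp ns" "\<beta> \<noteq> 0"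
    and spec: "\<forall>g\<in>grp ns. exp (\<i> * of_real t * eigval ns S g) = \<alpha> + \<beta> * chi ns a g"
  shows "gadd ns a a = gzero ns"
proof (rule gadd_self_eq_gzeroI[OF assms(1)])
  fix g assume g: "g \<in> grp ns"
  have "\<alpha> + \<beta> * chi ns a (gneg ns g) = \<alpha> + \<beta> * chi ns a g"
    using spec[rule_format, OF gneg_grp] spec[rule_format, OF g] by (simp add: eigval_gneg)
  then have "chi ns a (gneg ns g) = chi ns a g"
    using assms(2) by simp
  then show "cnj (chi ns a g) = chi ns a g"
    by (simp add: chi_gneg)
qed

lemma gneg_in_connection_iff: "a \<in> grp ns \<Longrightarrow> gneg ns a \<in> S \<longleftrightarrow> a \<in> S"
  using connection_symmetric gneg_gneg by (metis image_eqI imageE)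

lemma sum_chi_mult_eigval:
  assumes "a \<in> grp ns"
  shows "(\<Sum>g\<in>grp ns. chi ns a g * eigval ns S g) = of_nat (card (grp ns)) * of_bool (a \<in> S)"
proof -
  have "chi ns a g * chi ns g s = chi ns (gadd ns a s) g" for g s
    by (simp add: chi_commute[of _ _ g] chi_gadd)
  then have "(\<Sum>g\<in>grp ns. chi ns a g * eigval ns S g) = (\<Sum>s\<in>S. \<Sum>g\<in>grp ns. chi ns (gadd ns a s) g)"
    by (simp add: eigval_def sum_distrib_left sum.swap[of _ "grp ns"])
  also have "\<dots> = (\<Sum>s\<in>S. if s = gneg ns a then of_nat (card (grp ns)) else 0)"
    using connection_subset gadd_eq_gzero_imp_eq_gneg gadd_gneg
    by (intro sum.cong) (auto simp: sum_chi)
  also have "\<dots> = of_nat (card (grp ns)) * of_bool (a \<in> S)"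
    using finite_connection gneg_in_connection_iff[OF assms] by simp
  finally show ?thesis .
qed

lemma algebraic_int_eigval:
  assumes "g \<in> grp ns"
  shows "algebraic_int (eigval ns S g)"
proof -
  let ?n = "card (grp ns)"
  obtain e where e: "bij_betw e {0..<?n} (grp ns)"
    using ex_bij_betw_nat_finite[OF finite_grp] by blast
  have e_grp: "i < ?n \<Longrightarrow> e i \<in> grp ns" for i
    using e by (auto simp: bij_betw_def)
  define A :: "int mat" where "A = mat ?n ?n (\<lambda>(i, j). if gsub ns (e i) (e j) \<in> S then 1 else 0)"
  define v where "v = vec ?n (\<lambda>i. chi ns g (e i))"
  have "map_mat of_int A *\<^sub>v v = eigval ns S g \<cdot>\<^sub>v v"
  proof (rule eq_vecI)
    fix i assume "i < dim_vec (eigval ns S g \<cdot>\<^sub>v v)"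
    hence i: "i < ?n" by (simp add: v_def)
    have "(map_mat of_int A *\<^sub>v v) $ i = (\<Sum>j = 0..<?n. adj ns S (e i) (e j) * chi ns g (e j))"
      using i by (auto simp: A_def v_def scalar_prod_def adj_def intro!: sum.cong)
    also have "\<dots> = (\<Sum>w\<in>grp ns. adj ns S (e i) w * chi ns g w)"
      by (rule sum.reindex_bij_betw[OF e])
    also have "\<dots> = eigval ns S g * chi ns g (e i)"
      by (rule adj_mult_chi[OF e_grp[OF i]])
    finally show "(map_mat of_int A *\<^sub>v v) $ i = (eigval ns S g \<cdot>\<^sub>v v) $ i"
      using i by (simp add: v_def)
  qed (simp add: A_def v_def)
  moreover have "v \<noteq> 0\<^sub>v ?n"
    using card_grp_pos by (metis chi_nonzero index_vec index_zero_vec(1) v_def)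
  ultimately have "eigenvector (map_mat of_int A) v (eigval ns S g)"
    unfolding eigenvector_def by (simp add: A_def v_def)
  then have "eigenvalue (map_mat of_int A) (eigval ns S g)"
    unfolding eigenvalue_def by blast
  moreover have "A \<in> carrier_mat ?n ?n"
    by (simp add: A_def)
  ultimately show ?thesis
    using algebraic_int_eigenvalue_of_int_mat by blast
qed

lemma integral_cayley_if_Rats:
  assumes "\<And>g. g \<in> grp ns \<Longrightarrow> eigval ns S g \<in> \<rat>"
  shows "integral_cayley ns S"
  unfolding integral_cayley_def
  using assms algebraic_int_eigval rational_algebraic_int_is_int by blast

lemma integral_cayley_if_subset_order_two:
  assumes "S \<subseteq> {a}" "gadd ns a a = gzero ns"
  shows "integral_cayley ns S"
proof (rule integral_cayley_if_Rats)
  fix g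
  have "S = {} \<or> S = {a}" using assms(1) by blast
  then show "eigval ns S g \<in> \<rat>"
    using chi_pm_one[OF assms(2), of g] by (auto simp: eigval_def chi_commute[of _ g])
qed

lemma sum_weighted_eigval_diff:
  assumes "gzero ns \<notin> S" "a \<in> grp ns" "a \<noteq> gzero ns"
  shows "(\<Sum>g\<in>grp ns. (1 + chi ns a h * chi ns a g) * (eigval ns S g - eigval ns S h))
    = of_nat (card (grp ns)) * (chi ns a h * of_bool (a \<in> S) - eigval ns S h)"
proof -
  let ?sg = "chi ns a h" and ?ev = "eigval ns S"
  have "(\<Sum>g\<in>grp ns. (1 + ?sg * chi ns a g) * (?ev g - ?ev h))
      = (\<Sum>g\<in>grp ns. ?ev g) + ?sg * (\<Sum>g\<in>grp ns. chi ns a g * ?ev g)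
        - ?ev h * (of_nat (card (grp ns)) + ?sg * (\<Sum>g\<in>grp ns. chi ns a g))"
    by (simp add: algebra_simps sum.distrib sum_subtractf sum_distrib_left)
  also have "\<dots> = of_nat (card (grp ns)) * (?sg * of_bool (a \<in> S) - ?ev h)"
    using sum_chi_mult_eigval[OF assms(2)] sum_chi_mult_eigval[OF gzero_grp] sum_chi[OF assms(2)] assms
    by (simp add: algebra_simps)
  finally show ?thesis .
qed

(* Eigenvalues in the same coset of the kernel of \<chi>_a differ by multiples of the period
   2\<pi>/t, and on the other coset the weight 1 + \<chi>_a(h) \<chi>_a vanishes. *)

lemma eigval_multiple_of_period:
  assumes "gzero ns \<notin> S" and a: "a \<in> grp ns" "a \<noteq> gzero ns" "gadd ns a a = gzero ns"
    and "t \<noteq> 0" "h \<in> grp ns"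
    and spec: "\<forall>g\<in>grp ns. exp (\<i> * of_real t * eigval ns S g) = \<alpha> + \<beta> * chi ns a g"
  shows "of_nat (card (grp ns)) * (chi ns a h * of_bool (a \<in> S) - eigval ns S h)
    / of_real (2 * pi / t) \<in> \<int>"
proof -
  let ?ev = "eigval ns S"
  have "(1 + chi ns a h * chi ns a g) * (?ev g - ?ev h) / of_real (2 * pi / t) \<in> \<int>"
    if g: "g \<in> grp ns" for g
  proof (cases "chi ns a g = chi ns a h")
    case True
    then have "(?ev g - ?ev h) / of_real (2 * pi / t) \<in> \<int>"
      using spec g \<open>h \<in> grp ns\<close> \<open>t \<noteq> 0\<close> exp_i_mult_eq_imp_Ints by metis
    moreover have "1 + chi ns a h * chi ns a g = 2"
      using True chi_pm_one[OF a(3), of h] by auto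
    ultimately show ?thesis
      by (metis Ints_mult Ints_numeral times_divide_eq_right)
  next
    case False
    then have "1 + chi ns a h * chi ns a g = 0"
      using chi_pm_one[OF a(3), of h] chi_pm_one[OF a(3), of g] by auto
    then show ?thesis by simp
  qed
  then have "(\<Sum>g\<in>grp ns. (1 + chi ns a h * chi ns a g) * (?ev g - ?ev h)) / of_real (2 * pi / t)
      \<in> \<int>"
    unfolding sum_divide_distrib by (rule Ints_sum)
  then show ?thesis
    unfolding sum_weighted_eigval_diff[OF assms(1) a(1,2)] .
qed

(* The case h = 0 of eigval_multiple_of_period makes the period rational unless S \<subseteq> {a};
   then every eigenvalue is rational. *)

lemma integral_cayley_if_spectrum:
  assumes "gzero ns \<notin> S" and a: "a \<in> grp ns" "a \<noteq> gzero ns" "gadd ns a a = gzero ns"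
    and "\<beta> \<noteq> 0"
    and spec: "\<forall>g\<in>grp ns. exp (\<i> * of_real t * eigval ns S g) = \<alpha> + \<beta> * chi ns a g"
  shows "integral_cayley ns S"
proof -
  let ?n = "card (grp ns)" and ?ev = "eigval ns S" and ?c = "complex_of_real (2 * pi / t)"
  have "t \<noteq> 0"
  proof
    assume "t = 0"
    obtain g1 where g1: "g1 \<in> grp ns" "chi ns a g1 = -1"
      using ex_chi_eq_neg_one[OF a] by blast
    with \<open>t = 0\<close> have "\<alpha> + \<beta> * chi ns a (gzero ns) = \<alpha> + \<beta> * chi ns a g1"
      using spec gzero_grp by (metis mult_zero_left of_real_0 mult_zero_right)
    then show False using \<open>\<beta> \<noteq> 0\<close> g1 by simp
  qed
  then have "?c \<noteq> 0" by simp
  note multiple = eigval_multiple_of_period[OF assms(1) a \<open>t \<noteq> 0\<close> _ spec]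
  show ?thesis
  proof (cases "card S = of_bool (a \<in> S)")
    case True
    then have "S \<subseteq> {a}"
      using finite_connection by (cases "a \<in> S") (auto simp: card_1_singleton_iff)
    then show ?thesis by (rule integral_cayley_if_subset_order_two[OF _ a(3)])
  next
    case False
    then have "of_nat ?n * (of_bool (a \<in> S) - ?ev (gzero ns)) \<noteq> 0"
      using card_grp_pos by (cases "a \<in> S") (auto simp: eigval_def)
    moreover have "of_nat ?n * (of_bool (a \<in> S) - ?ev (gzero ns)) \<in> \<rat>"
      by (simp add: eigval_def)
    moreover have "of_nat ?n * (of_bool (a \<in> S) - ?ev (gzero ns)) / ?c \<in> \<int>"
      using multiple[OF gzero_grp] by simp
    ultimately have "?c \<in> \<rat>"
      by (rule Rats_if_Ints_quotient_dividend)
    have "?ev h \<in> \<rat>" if h: "h \<in> grp ns" for h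
    proof -
      let ?x = "chi ns a h * of_bool (a \<in> S)"
      have "of_nat ?n * (?x - ?ev h) \<in> \<rat>"
        using Rats_if_Ints_quotient_divisor[OF \<open>?c \<noteq> 0\<close> \<open>?c \<in> \<rat>\<close> multiple[OF h]] .
      then have "of_nat ?n * (?x - ?ev h) / of_nat ?n \<in> \<rat>"
        by (rule Rats_divide[OF _ Rats_of_nat])
      then have diff: "?x - ?ev h \<in> \<rat>"
        using card_grp_pos by simp
      have x: "?x \<in> \<rat>"
        using chi_pm_one[OF a(3), of h] by auto
      show ?thesis
        using Rats_diff[OF x diff] by simp
    qed
    then show ?thesis by (rule integral_cayley_if_Rats)
  qed
qed

lemma norm_amplitudes_if_spectrum:
  assumes "a \<in> grp ns" "a \<noteq> gzero ns" "gadd ns a a = gzero ns"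
    and spec: "\<forall>g\<in>grp ns. exp (\<i> * of_real t * eigval ns S g) = \<alpha> + \<beta> * chi ns a g"
  shows "(cmod \<alpha>)\<^sup>2 + (cmod \<beta>)\<^sup>2 = 1"
proof -
  obtain g1 where g1: "g1 \<in> grp ns" "chi ns a g1 = -1"
    using ex_chi_eq_neg_one[OF assms(1-3)] by blast
  have "\<alpha> + \<beta> = exp (\<i> * of_real t * eigval ns S (gzero ns))"
    using spec by simp
  then have "cmod (\<alpha> + \<beta>) = 1"
    by (simp only: norm_exp_i_mult_eigval)
  have "\<alpha> - \<beta> = exp (\<i> * of_real t * eigval ns S g1)"
    using spec g1 by simp
  then have "cmod (\<alpha> - \<beta>) = 1"
    by (simp only: norm_exp_i_mult_eigval)
  with \<open>cmod (\<alpha> + \<beta>) = 1\<close> show ?thesis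
    using parallelogram_law_cmod[of \<alpha> \<beta>] by simp
qed

end

theorem theorem2p2:
  fixes ns :: "nat list" and S :: "int list set" and \<alpha> \<beta> :: complex
    and x y :: "int list" and t :: real
  assumes "\<forall>i<length ns. ns ! i \<ge> 1"
    and "even (prod_list ns)"
    and "S \<subseteq> grp ns"
    and "gneg ns ` S = S"
    and "gzero ns \<notin> S"
    and "\<alpha> \<noteq> 0" and "\<beta> \<noteq> 0"
    and "x \<in> grp ns" and "y \<in> grp ns" and "x \<noteq> y"
  shows "frac_revival ns S \<alpha> \<beta> x y t \<longleftrightarrow>
    (has_order_two ns (gsub ns x y)
     \<and> integral_cayley ns S
     \<and> (\<forall>g\<in>grp ns. chi ns (gsub ns x y) g = 1 \<longrightarrow> exp (\<i> * of_real t * eigval ns S g) = \<alpha> + \<beta>)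
     \<and> (\<forall>g\<in>grp ns. chi ns (gsub ns x y) g = -1 \<longrightarrow> exp (\<i> * of_real t * eigval ns S g) = \<alpha> - \<beta>))"
proof -
  interpret cayley_graph ns S
    using assms(1,3,4) by unfold_locales
  define a where "a = gsub ns x y"
  have a: "a \<in> grp ns" "a \<noteq> gzero ns"
    using gsub_eq_gzero_iff assms(8-10) by (auto simp: a_def)
  let ?spec = "\<forall>g\<in>grp ns. exp (\<i> * of_real t * eigval ns S g) = \<alpha> + \<beta> * chi ns a g"
  have revival: "frac_revival ns S \<alpha> \<beta> x y t \<longleftrightarrow> ?spec \<and> (cmod \<alpha>)\<^sup>2 + (cmod \<beta>)\<^sup>2 = 1"
    using transH_column_iff[OF assms(8,9)] assms(7) by (simp add: frac_revival_def a_def)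
  have spec_iff: "?spec \<longleftrightarrow>
      (\<forall>g\<in>grp ns. chi ns a g = 1 \<longrightarrow> exp (\<i> * of_real t * eigval ns S g) = \<alpha> + \<beta>) \<and>
      (\<forall>g\<in>grp ns. chi ns a g = -1 \<longrightarrow> exp (\<i> * of_real t * eigval ns S g) = \<alpha> - \<beta>)"
    if "gadd ns a a = gzero ns"
    using chi_pm_one[OF that] by force
  show ?thesis
    unfolding revival has_order_two_def a_def[symmetric]
    using a assms(5,7) spec_iff norm_amplitudes_if_spectrum gadd_self_eq_gzero_if_spectrum
      integral_cayley_if_spectrum
    by blast
qed

end
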